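(* Let $\phi$ be a $\gamma$-leaky, $H$-smooth activation, $R=\max_{i,j}\|x_i\|/\|x_j\|$, $C_R=10R^2\gamma^{-2}+10$, and suppose for all $i\in[n]$, $\|x_i\|^2\ge5\gamma^{-2}C_Rn\max_{k\ne i}|\langle x_i,x_k\rangle|$. Let $\delta\in(0,1)$ and assume (A1) $\alpha\le\gamma^2(5nR_{\max}^2R^2C_R\max(1,H))^{-1}$ and (A2) $\omega_{\mathrm{init}}\le\alpha\gamma^2R_{\min}(72RC_Rn\sqrt{md\log(4m/\delta)})^{-1}$. Then with probability at least $1-\delta$ over initialization, the gradient descent iterates satisfy $$\sup_{t\ge0}\ \max_{i,j\in[n]}\frac{\ell'(y_if(x_i;W^{(t)}))}{\ell'(y_jf(x_j;W^{(t)}))}\le C_R.$$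
   Context: Network: $f(x;W)=\sum_{j=1}^ma_j\phi(\langle w_j,x\rangle)$, $W\in\mathbb{R}^{m\times d}$ with rows $w_j$, fixed $a_j\in\{\pm1/\sqrt m\}$. $\phi$ is $\gamma$-leaky, $H$-smooth ($\gamma\in(0,1]$, $H>0$) if $\phi(0)=0$, $\phi$ twice differentiable, $\gamma\le\phi'\le1$, $|\phi''|\le H$. Logistic loss $\ell(z)=\log(1+e^{-z})$, $\hat L(W)=\frac1n\sum_i\ell(y_if(x_i;W))$. Gradient descent: $W^{(0)}$ with i.i.d. $\mathsf N(0,\omega_{\mathrm{init}}^2)$ entries, $W^{(t+1)}=W^{(t)}-\alpha\nabla\hat L(W^{(t)})$. $R_{\max}=\max_i\|x_i\|$, $R_{\min}=\min_i\|x_i\|$. *)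

theory Defs
  imports "HOL-Probability.Probability"
begin

definition leaky_smooth :: "(real \<Rightarrow> real) \<Rightarrow> real \<Rightarrow> real \<Rightarrow> bool" where
  "leaky_smooth \<phi> \<gamma> H \<longleftrightarrow> 0 < \<gamma> \<and> \<gamma> \<le> 1 \<and> 0 < H \<and> \<phi> 0 = 0 \<and>
     (\<forall>z. \<phi> differentiable at z) \<and> (\<forall>z. deriv \<phi> differentiable at z) \<and>
     (\<forall>z. \<gamma> \<le> deriv \<phi> z \<and> deriv \<phi> z \<le> 1) \<and>
     (\<forall>z. \<bar>deriv (deriv \<phi>) z\<bar> \<le> H)"

definition logistic :: "real \<Rightarrow> real" where
  "logistic z = ln (1 + exp (- z))"

definition net :: "(real \<Rightarrow> real) \<Rightarrow> ('m::finite \<Rightarrow> real) \<Rightarrow> real^'d^'m \<Rightarrow> real^'d \<Rightarrow> real" where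
  "net \<phi> a W x = (\<Sum>j\<in>UNIV. a j * \<phi> ((W $ j) \<bullet> x))"

definition emp_risk :: "(real \<Rightarrow> real) \<Rightarrow> ('m::finite \<Rightarrow> real) \<Rightarrow> nat \<Rightarrow> (nat \<Rightarrow> real^'d)
     \<Rightarrow> (nat \<Rightarrow> real) \<Rightarrow> real^'d^'m \<Rightarrow> real" where
  "emp_risk \<phi> a n x y W = (1 / real n) * (\<Sum>i<n. logistic (y i * net \<phi> a W (x i)))"

definition gradient :: "('a::real_inner \<Rightarrow> real) \<Rightarrow> 'a \<Rightarrow> 'a" where
  "gradient L W = (THE D. GDERIV L W :> D)"

fun gd_iter :: "('a::real_inner \<Rightarrow> real) \<Rightarrow> real \<Rightarrow> 'a \<Rightarrow> nat \<Rightarrow> 'a" where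
  "gd_iter L \<alpha> W0 0 = W0"
| "gd_iter L \<alpha> W0 (Suc t) = gd_iter L \<alpha> W0 t - \<alpha> *\<^sub>R gradient L (gd_iter L \<alpha> W0 t)"

text \<open>Initialization distribution: i.i.d. N(0, omega^2) entries.\<close>
definition init_measure :: "real \<Rightarrow> (real^'d^'m) measure" where
  "init_measure \<omega> =
     distr (PiM (UNIV :: ('m \<times> 'd) set) (\<lambda>_. density lborel (normal_density 0 \<omega>)))
           borel (\<lambda>f. \<chi> j k. f (j, k))"

end

theory Submission
  imports Defs
begin

text \<open>Write z_i = y_i f(x_i; W) for the margins and g_i = -logistic'(z_i) = 1/(1 + exp z_i) for
  the weights with which the samples enter the gradient. Replacing each neuron by its secant slope
  (between gamma and 1), one gradient step raises z_k by between (4/5) gamma^2 (alpha/n) g_k |x_k|^2 and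
  (6/5) (alpha/n) g_k |x_k|^2: the cross terms are at most gamma^2/5 of the self term by near-orthogonality,
  provided the weights are already within a factor C_R of each other. Then 1 + exp z_k, the reciprocal
  weight, grows by roughly (alpha/n) |x_k|^2, and these growth rates agree up to the factor R^2 that
  C_R absorbs, so the ratio bound on the weights is inductive (margins only increase, so they stay
  above -ln 2). The bound holds initially when all |f(x_k; W0)| <= 1/2, which follows from
  |W0| <= 2 omega sqrt(m d log(4m/delta)); a Chernoff bound on the squared Gaussian entries shows
  that this event has probability at least 1 - delta.\<close>

definition logistic_weight :: "real \<Rightarrow> real" where
  "logistic_weight z = 1 / (1 + exp z)"

lemma logistic_weight_pos: "0 < logistic_weight z"
  unfolding logistic_weight_def by (simp add: add_pos_pos)

lemma logistic_weight_less_one: "logistic_weight z < 1"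
  unfolding logistic_weight_def by (simp add: add_pos_pos divide_less_eq)

lemma DERIV_logistic: "DERIV logistic z :> - logistic_weight z"
proof -
  have "DERIV (\<lambda>z. ln (1 + exp (- z))) z :> (1 / (1 + exp (-z))) * (exp (-z) * (-1))"
    by (auto intro!: derivative_eq_intros simp: add_pos_pos)
  moreover have "(1 / (1 + exp (-z))) * (exp (-z) * (-1)) = - logistic_weight z"
    by (simp add: logistic_weight_def exp_minus field_simps add_pos_pos)
  ultimately show ?thesis unfolding logistic_def[abs_def] by simp
qed

lemma deriv_logistic: "deriv logistic z = - logistic_weight z"
  using DERIV_logistic DERIV_imp_deriv by blast

lemma deriv_logistic_ratio:
  "deriv logistic u / deriv logistic v = (1 + exp v) / (1 + exp u)"
  unfolding deriv_logistic logistic_weight_def by (simp add: add_pos_pos)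

lemma GDERIV_sum:
  assumes "finite S" "\<And>i. i \<in> S \<Longrightarrow> GDERIV (f i) x :> D i"
  shows "GDERIV (\<lambda>x. \<Sum>i\<in>S. f i x) x :> (\<Sum>i\<in>S. D i)"
  using assms by (induction S rule: finite_induct) (simp_all add: GDERIV_const GDERIV_add)

lemma GDERIV_cmult: "GDERIV f x :> D \<Longrightarrow> GDERIV (\<lambda>x. c * f x) x :> c *\<^sub>R D"
  by (rule GDERIV_DERIV_compose) (auto intro!: derivative_eq_intros)

lemma gradient_eqI:
  fixes f :: "'a::real_inner \<Rightarrow> real"
  assumes "GDERIV f x :> D"
  shows "gradient f x = D"
  unfolding gradient_def
proof (rule the_equality)
  show "GDERIV f x :> D" by (fact assms)
next
  fix D' assume "GDERIV f x :> D'"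
  then have "(\<lambda>h. h \<bullet> D') = (\<lambda>h. h \<bullet> D)"
    using assms has_derivative_unique unfolding gderiv_def by blast
  then have "(D' - D) \<bullet> D' = (D' - D) \<bullet> D" by metis
  then have "(D' - D) \<bullet> (D' - D) = 0" by (simp add: inner_diff_right)
  then show "D' = D" by simp
qed

lemma GDERIV_row_inner: "GDERIV (\<lambda>W::real^'n^'m. W$j \<bullet> v) W :> axis j v"
proof -
  have "bounded_linear (\<lambda>W::real^'n^'m. W$j \<bullet> v)"
    using bounded_linear_compose[OF bounded_linear_inner_left bounded_linear_vec_nth] by blast
  then show ?thesis
    unfolding gderiv_def by (simp add: inner_axis bounded_linear_imp_has_derivative)
qed

lemma sum_scaleR_axis: "(\<Sum>j\<in>UNIV. c j *\<^sub>R axis j v) = (\<chi> j. c j *\<^sub>R v)"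
  by (simp add: vec_eq_iff axis_def if_distrib[of "scaleR _"] cong: if_cong)

lemma GDERIV_net:
  assumes "\<And>z. \<phi> differentiable at z"
  shows "GDERIV (\<lambda>W. net \<phi> a W v) W :> (\<chi> j. (a j * deriv \<phi> (W$j \<bullet> v)) *\<^sub>R v)"
proof -
  have "DERIV \<phi> z :> deriv \<phi> z" for z
    using assms DERIV_deriv_iff_real_differentiable by blast
  then have "GDERIV (\<lambda>W. net \<phi> a W v) W :> (\<Sum>j\<in>UNIV. a j *\<^sub>R (deriv \<phi> (W$j \<bullet> v) *\<^sub>R axis j v))"
    unfolding net_def by (intro GDERIV_sum GDERIV_cmult GDERIV_DERIV_compose[OF GDERIV_row_inner]) auto
  then show ?thesis
    by (simp add: sum_scaleR_axis)
qed

lemma gradient_emp_risk_row: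
  assumes "\<And>z. \<phi> differentiable at z"
  shows "gradient (emp_risk \<phi> a n x y) W $ j =
    - (\<Sum>i<n. (logistic_weight (y i * net \<phi> a W (x i)) * y i * a j * deriv \<phi> (W$j \<bullet> x i) / real n) *\<^sub>R x i)"
proof -
  have "GDERIV (emp_risk \<phi> a n x y) W :> (1 / real n) *\<^sub>R (\<Sum>i<n.
      (- logistic_weight (y i * net \<phi> a W (x i))) *\<^sub>R (y i *\<^sub>R (\<chi> j. (a j * deriv \<phi> (W$j \<bullet> x i)) *\<^sub>R x i)))"
    unfolding emp_risk_def[abs_def]
    by (intro GDERIV_cmult GDERIV_sum GDERIV_DERIV_compose[OF GDERIV_cmult[OF GDERIV_net[OF assms]] DERIV_logistic]) auto
  then show ?thesis
    by (simp add: gradient_eqI scaleR_sum_right sum_negf mult.assoc)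
qed

lemma leaky_smooth_secant:
  assumes "leaky_smooth \<phi> \<gamma> H"
  obtains c where "\<gamma> \<le> c" "c \<le> 1" "\<phi> v - \<phi> u = c * (v - u)"
proof -
  have d: "DERIV \<phi> z :> deriv \<phi> z" for z
    using assms DERIV_deriv_iff_real_differentiable unfolding leaky_smooth_def by blast
  have b: "\<gamma> \<le> deriv \<phi> z" "deriv \<phi> z \<le> 1" for z
    using assms unfolding leaky_smooth_def by auto
  have "\<exists>z. \<phi> v - \<phi> u = deriv \<phi> z * (v - u)"
  proof (cases u v rule: linorder_cases)
    case less
    then show ?thesis using MVT2[of u v \<phi> "deriv \<phi>"] d by (metis mult.commute)
  next
    case greater
    then obtain z where "\<phi> u - \<phi> v = (u - v) * deriv \<phi> z" using MVT2[of v u \<phi> "deriv \<phi>"] d by blast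
    then show ?thesis by (metis minus_diff_eq minus_mult_left mult.commute)
  qed simp
  then show ?thesis using b that by blast
qed

lemma gd_row_increment:
  assumes "\<And>z. \<phi> differentiable at z"
    and "W' = W - \<alpha> *\<^sub>R gradient (emp_risk \<phi> a n x y) W"
  shows "W'$j \<bullet> v - W$j \<bullet> v = \<alpha> / real n * a j *
    (\<Sum>i<n. logistic_weight (y i * net \<phi> a W (x i)) * y i * deriv \<phi> (W$j \<bullet> x i) * (x i \<bullet> v))"
  unfolding assms(2)
  by (simp add: gradient_emp_risk_row[OF assms(1)] inner_diff_left inner_sum_left
      sum_distrib_left algebra_simps)

lemma margin_increment_eq:
  fixes W :: "real^'d^'m::finite"
  assumes act: "leaky_smooth \<phi> \<gamma> H"
    and a2: "\<forall>j. (a j)^2 = 1 / real CARD('m)"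
    and W': "W' = W - \<alpha> *\<^sub>R gradient (emp_risk \<phi> a n x y) W"
  obtains c where "\<And>j. \<gamma> \<le> c j" "\<And>j. c j \<le> 1"
    "y k * net \<phi> a W' (x k) - y k * net \<phi> a W (x k) =
       \<alpha> / (real n * real CARD('m)) * (\<Sum>j\<in>UNIV. c j * (\<Sum>i<n.
         logistic_weight (y i * net \<phi> a W (x i)) * y k * y i * deriv \<phi> (W$j \<bullet> x i) * (x i \<bullet> x k)))"
proof -
  define T where "T j = (\<Sum>i<n.
    logistic_weight (y i * net \<phi> a W (x i)) * y k * y i * deriv \<phi> (W$j \<bullet> x i) * (x i \<bullet> x k))" for j
  have "\<forall>j. \<exists>c. \<gamma> \<le> c \<and> c \<le> 1 \<and> \<phi> (W'$j \<bullet> x k) - \<phi> (W$j \<bullet> x k) = c * (W'$j \<bullet> x k - W$j \<bullet> x k)"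
    using leaky_smooth_secant[OF act] by metis
  then obtain c where c: "\<And>j. \<gamma> \<le> c j" "\<And>j. c j \<le> 1"
    "\<And>j. \<phi> (W'$j \<bullet> x k) - \<phi> (W$j \<bullet> x k) = c j * (W'$j \<bullet> x k - W$j \<bullet> x k)"
    by metis
  have dphi: "\<And>z. \<phi> differentiable at z" using act unfolding leaky_smooth_def by blast
  have neuron: "y k * a j * (\<phi> (W'$j \<bullet> x k) - \<phi> (W$j \<bullet> x k))
      = \<alpha> / (real n * real CARD('m)) * (c j * T j)" for j
  proof -
    have "y k * a j * (\<phi> (W'$j \<bullet> x k) - \<phi> (W$j \<bullet> x k)) = (a j)^2 * (\<alpha> / real n) * c j * T j"
      unfolding c(3) gd_row_increment[OF dphi W'] T_def
      by (simp add: power2_eq_square sum_distrib_left algebra_simps)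
    then show ?thesis using a2 by (simp add: ac_simps)
  qed
  have "y k * net \<phi> a W' (x k) - y k * net \<phi> a W (x k)
      = (\<Sum>j\<in>UNIV. y k * a j * (\<phi> (W'$j \<bullet> x k) - \<phi> (W$j \<bullet> x k)))"
    unfolding net_def by (simp add: sum_distrib_left sum_subtractf[symmetric] algebra_simps)
  also have "\<dots> = \<alpha> / (real n * real CARD('m)) * (\<Sum>j\<in>UNIV. c j * T j)"
    unfolding neuron by (simp add: sum_distrib_left)
  finally show ?thesis using c that unfolding T_def by blast
qed

lemma secant_weighted_term_bounds:
  fixes c p g N E X \<gamma> :: real
  assumes "\<gamma> \<le> c" "c \<le> 1" "\<gamma> \<le> p" "p \<le> 1" "0 < \<gamma>" "0 \<le> g" "0 \<le> N" "\<bar>E\<bar> \<le> X"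
  shows "\<gamma>^2 * g * N - X \<le> c * (g * p * N + E)" and "c * (g * p * N + E) \<le> g * N + X"
proof -
  have cE: "\<bar>c * E\<bar> \<le> X"
  proof -
    have "\<bar>c * E\<bar> \<le> 1 * X" unfolding abs_mult using assms by (intro mult_mono) auto
    then show ?thesis by simp
  qed
  have "\<gamma>^2 \<le> c * p" using assms by (simp add: power2_eq_square mult_mono)
  then have "\<gamma>^2 * (g * N) \<le> c * p * (g * N)" using assms by (intro mult_right_mono) auto
  then show "\<gamma>^2 * g * N - X \<le> c * (g * p * N + E)" using cE by (simp add: algebra_simps abs_le_iff)
  have "c * p \<le> 1" using assms by (metis mult_le_one order.trans less_imp_le)
  then have "c * p * (g * N) \<le> 1 * (g * N)" using assms by (intro mult_right_mono) auto
  then show "c * (g * p * N + E) \<le> g * N + X" using cE by (simp add: algebra_simps abs_le_iff)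
qed

lemma signed_cross_sum_abs_le:
  fixes x :: "nat \<Rightarrow> 'a::real_inner"
  assumes y: "\<forall>i<n. y i = 1 \<or> y i = -1" and k: "k < n"
    and p: "\<And>i. \<bar>p i\<bar> \<le> 1" and g: "\<And>i. 0 \<le> g i"
  shows "\<bar>\<Sum>i\<in>{..<n}-{k}. g i * y k * y i * p i * (x i \<bullet> x k)\<bar>
           \<le> (\<Sum>i\<in>{..<n}-{k}. g i * \<bar>x i \<bullet> x k\<bar>)"
proof -
  have "\<bar>g i * y k * y i * p i * (x i \<bullet> x k)\<bar> \<le> g i * \<bar>x i \<bullet> x k\<bar>" if i: "i \<in> {..<n} - {k}" for i
  proof -
    have "\<bar>y k\<bar> = 1" "\<bar>y i\<bar> = 1" using y k i by auto
    then have "\<bar>g i * y k * y i * p i * (x i \<bullet> x k)\<bar> = \<bar>p i\<bar> * (g i * \<bar>x i \<bullet> x k\<bar>)"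
      using g[of i] by (simp add: abs_mult)
    also have "\<dots> \<le> 1 * (g i * \<bar>x i \<bullet> x k\<bar>)"
      using p[of i] g[of i] by (intro mult_right_mono) auto
    finally show ?thesis by simp
  qed
  then show ?thesis by (intro order_trans[OF sum_abs] sum_mono)
qed

lemma scaled_mean_bounds:
  fixes f :: "'j::finite \<Rightarrow> real"
  assumes lo: "\<And>j. lo \<le> f j" and hi: "\<And>j. f j \<le> hi" and s: "0 \<le> s"
  shows "s * lo \<le> s / real CARD('j) * (\<Sum>j\<in>UNIV. f j)"
    and "s / real CARD('j) * (\<Sum>j\<in>UNIV. f j) \<le> s * hi"
proof -
  have m: "0 < real CARD('j)" by simp
  have "real CARD('j) * lo \<le> (\<Sum>j\<in>UNIV. f j)" "(\<Sum>j\<in>UNIV. f j) \<le> real CARD('j) * hi"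
    using sum_bounded_below[of "UNIV :: 'j set" lo f] sum_bounded_above[of "UNIV :: 'j set" f hi] lo hi
    by auto
  then have "s / real CARD('j) * (real CARD('j) * lo) \<le> s / real CARD('j) * (\<Sum>j\<in>UNIV. f j)"
      "s / real CARD('j) * (\<Sum>j\<in>UNIV. f j) \<le> s / real CARD('j) * (real CARD('j) * hi)"
    using s by (intro mult_left_mono; simp)+
  then show "s * lo \<le> s / real CARD('j) * (\<Sum>j\<in>UNIV. f j)"
      "s / real CARD('j) * (\<Sum>j\<in>UNIV. f j) \<le> s * hi"
    using m by simp_all
qed

lemma margin_increment_bounds:
  fixes W :: "real^'d^'m::finite" and x :: "nat \<Rightarrow> real^'d"
  assumes act: "leaky_smooth \<phi> \<gamma> H"
    and a2: "\<forall>j. (a j)^2 = 1 / real CARD('m)"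
    and y: "\<forall>i<n. y i = 1 \<or> y i = -1"
    and k: "k < n"
    and \<alpha>: "0 \<le> \<alpha>"
    and W': "W' = W - \<alpha> *\<^sub>R gradient (emp_risk \<phi> a n x y) W"
  defines "g \<equiv> \<lambda>i. logistic_weight (y i * net \<phi> a W (x i))"
  defines "X \<equiv> (\<Sum>i\<in>{..<n}-{k}. g i * \<bar>x i \<bullet> x k\<bar>)"
  shows "\<alpha> / real n * (\<gamma>^2 * g k * norm (x k)^2 - X)
           \<le> y k * net \<phi> a W' (x k) - y k * net \<phi> a W (x k)"
    and "y k * net \<phi> a W' (x k) - y k * net \<phi> a W (x k)
           \<le> \<alpha> / real n * (g k * norm (x k)^2 + X)"
proof -
  define p where "p i j = deriv \<phi> (W$j \<bullet> x i)" for i j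
  define T where "T j = (\<Sum>i<n. g i * y k * y i * p i j * (x i \<bullet> x k))" for j
  obtain c where c: "\<And>j. \<gamma> \<le> c j" "\<And>j. c j \<le> 1"
    and incr: "y k * net \<phi> a W' (x k) - y k * net \<phi> a W (x k) =
      \<alpha> / (real n * real CARD('m)) * (\<Sum>j\<in>UNIV. c j * T j)"
    using margin_increment_eq[OF act a2 W'] unfolding T_def p_def g_def by blast
  have p: "\<gamma> \<le> p i j" "p i j \<le> 1" "0 < \<gamma>" for i j
    using act unfolding leaky_smooth_def p_def by auto
  have g: "0 \<le> g i" for i using logistic_weight_pos less_imp_le unfolding g_def by blast
  have p_abs: "\<bar>p i j\<bar> \<le> 1" for i j
    unfolding abs_le_iff using p(1,2)[of i j] p(3) by linarith
  have neuron: "\<gamma>^2 * g k * norm (x k)^2 - X \<le> c j * T j" "c j * T j \<le> g k * norm (x k)^2 + X" for j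
  proof -
    define E where "E = (\<Sum>i\<in>{..<n}-{k}. g i * y k * y i * p i j * (x i \<bullet> x k))"
    have "y k * y k = 1" using y k by auto
    then have "T j = g k * p k j * norm (x k)^2 + E"
      unfolding T_def E_def using k
      by (simp add: sum.remove[of "{..<n}" k] power2_norm_eq_inner algebra_simps)
    moreover have "\<bar>E\<bar> \<le> X"
      unfolding E_def X_def by (rule signed_cross_sum_abs_le[OF y k p_abs g])
    ultimately show "\<gamma>^2 * g k * norm (x k)^2 - X \<le> c j * T j" "c j * T j \<le> g k * norm (x k)^2 + X"
      using secant_weighted_term_bounds[OF c(1,2) p g[of k]] by simp_all
  qed
  have "\<alpha> / (real n * real CARD('m)) = \<alpha> / real n / real CARD('m)" by simp
  then show "\<alpha> / real n * (\<gamma>^2 * g k * norm (x k)^2 - X)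
           \<le> y k * net \<phi> a W' (x k) - y k * net \<phi> a W (x k)"
    and "y k * net \<phi> a W' (x k) - y k * net \<phi> a W (x k)
           \<le> \<alpha> / real n * (g k * norm (x k)^2 + X)"
    unfolding incr using scaled_mean_bounds[OF neuron, of "\<alpha> / real n"] \<alpha> by simp_all
qed

definition margins_balanced :: "real \<Rightarrow> nat \<Rightarrow> (nat \<Rightarrow> real) \<Rightarrow> bool" where
  "margins_balanced C n z \<longleftrightarrow>
     (\<forall>i<n. - ln 2 \<le> z i) \<and> (\<forall>i<n. \<forall>j<n. 1 + exp (z j) \<le> C * (1 + exp (z i)))"

lemma weight_ratio_step:
  fixes zi zj Di Dj C :: real
  assumes zi: "- ln 2 \<le> zi"
    and ratio: "1 + exp zj \<le> C * (1 + exp zi)"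
    and Di: "0 \<le> Di" and Dj: "0 \<le> Dj" "Dj \<le> 1/2"
    and growth: "6 * (1 + exp zj) * Dj \<le> C * (1 + exp zi) * Di"
  shows "1 + exp (zj + Dj) \<le> C * (1 + exp (zi + Di))"
proof -
  have pos: "0 < 1 + exp zi" "0 < 1 + exp zj" by (simp_all add: add_pos_pos)
  with ratio have "0 < C * (1 + exp zi)" by linarith
  with pos have C: "0 \<le> C" by (simp add: zero_less_mult_iff)
  have "exp (zj + Dj) \<le> exp zj * (1 + 2 * Dj)"
    using real_exp_bound_lemma[OF Dj] by (simp add: exp_add)
  also have "\<dots> \<le> exp zj + 2 * ((1 + exp zj) * Dj)"
    using Dj by (simp add: algebra_simps)
  finally have j: "1 + exp (zj + Dj) \<le> (1 + exp zj) + 2 * ((1 + exp zj) * Dj)" by simp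
  have "exp (- ln 2) \<le> exp zi" using zi by simp
  then have "1 + exp zi \<le> 3 * exp zi" by (simp add: exp_minus)
  then have "C * (1 + exp zi) * Di \<le> C * (3 * exp zi) * Di"
    using C Di by (simp add: mult_left_mono mult_right_mono)
  with growth have "6 * ((1 + exp zj) * Dj) \<le> 3 * (C * (exp zi * Di))"
    by (simp only: mult.assoc mult.left_commute)
  then have "2 * ((1 + exp zj) * Dj) \<le> C * (exp zi * Di)" by linarith
  moreover have "exp zi * (1 + Di) \<le> exp (zi + Di)"
    by (simp add: exp_add)
  ultimately have "1 + exp (zj + Dj) \<le> C * (1 + exp zi * (1 + Di))"
    using j ratio by (simp add: algebra_simps)
  also have "\<dots> \<le> C * (1 + exp (zi + Di))"
    using C \<open>exp zi * (1 + Di) \<le> exp (zi + Di)\<close> by (simp add: mult_left_mono)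
  finally show ?thesis .
qed

lemma logistic_weight_le_mult_iff:
  "0 < C \<Longrightarrow> logistic_weight u \<le> C * logistic_weight v \<longleftrightarrow> 1 + exp v \<le> C * (1 + exp u)"
  unfolding logistic_weight_def by (simp add: add_pos_pos field_simps)

lemma cross_terms_le:
  fixes x :: "nat \<Rightarrow> 'a::real_inner"
  assumes bal: "margins_balanced C n z" and C: "0 < C" and \<gamma>: "0 < \<gamma>" and k: "k < n"
    and near: "\<forall>i<n. \<forall>k<n. k \<noteq> i \<longrightarrow> norm (x i)^2 \<ge> 5 / \<gamma>^2 * C * real n * \<bar>x i \<bullet> x k\<bar>"
  shows "(\<Sum>i\<in>{..<n}-{k}. logistic_weight (z i) * \<bar>x i \<bullet> x k\<bar>)
           \<le> \<gamma>^2 / 5 * logistic_weight (z k) * norm (x k)^2"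
proof -
  have n: "0 < real n" using k by simp
  have summand: "logistic_weight (z i) * \<bar>x i \<bullet> x k\<bar> \<le> \<gamma>^2 / (5 * real n) * logistic_weight (z k) * norm (x k)^2"
    if i: "i \<in> {..<n}-{k}" for i
  proof -
    have "logistic_weight (z i) \<le> C * logistic_weight (z k)"
      using bal i k C logistic_weight_le_mult_iff unfolding margins_balanced_def by auto
    moreover have "\<bar>x i \<bullet> x k\<bar> \<le> \<gamma>^2 / (5 * C * real n) * norm (x k)^2"
    proof -
      have "5 / \<gamma>^2 * C * real n * \<bar>x i \<bullet> x k\<bar> \<le> norm (x k)^2"
        using near i k by (auto simp: inner_commute)
      moreover have "0 < 5 / \<gamma>^2 * C * real n" using C \<gamma> n by simp
      ultimately have "\<bar>x i \<bullet> x k\<bar> \<le> norm (x k)^2 / (5 / \<gamma>^2 * C * real n)"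
        using pos_le_divide_eq[of "5 / \<gamma>^2 * C * real n"] by (simp only: mult.commute)
      also have "\<dots> = \<gamma>^2 / (5 * C * real n) * norm (x k)^2" by simp
      finally show ?thesis .
    qed
    ultimately have "logistic_weight (z i) * \<bar>x i \<bullet> x k\<bar>
        \<le> (C * logistic_weight (z k)) * (\<gamma>^2 / (5 * C * real n) * norm (x k)^2)"
      using logistic_weight_pos[of "z i"] by (intro mult_mono) auto
    also have "\<dots> = \<gamma>^2 / (5 * real n) * logistic_weight (z k) * norm (x k)^2"
      using C by simp
    finally show ?thesis .
  qed
  have "(\<Sum>i\<in>{..<n}-{k}. logistic_weight (z i) * \<bar>x i \<bullet> x k\<bar>)
      \<le> real (card ({..<n}-{k})) * (\<gamma>^2 / (5 * real n) * logistic_weight (z k) * norm (x k)^2)"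
    by (rule sum_bounded_above) (rule summand)
  also have "\<dots> \<le> real n * (\<gamma>^2 / (5 * real n) * logistic_weight (z k) * norm (x k)^2)"
    using k logistic_weight_pos[of "z k"] by (intro mult_right_mono) auto
  also have "\<dots> = \<gamma>^2 / 5 * logistic_weight (z k) * norm (x k)^2"
    using n by simp
  finally show ?thesis .
qed

lemma margin_increment_bounds_balanced:
  fixes x :: "nat \<Rightarrow> 'a::real_inner" and z z' :: "nat \<Rightarrow> real"
  assumes \<gamma>: "0 < \<gamma>" "\<gamma> \<le> 1" and C: "0 < C"
    and near: "\<forall>i<n. \<forall>k<n. k \<noteq> i \<longrightarrow> norm (x i)^2 \<ge> 5 / \<gamma>^2 * C * real n * \<bar>x i \<bullet> x k\<bar>"
    and bal: "margins_balanced C n z" and k: "k < n" and \<alpha>: "0 \<le> \<alpha>"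
    and lower: "\<alpha> / real n * (\<gamma>^2 * logistic_weight (z k) * norm (x k)^2
                   - (\<Sum>i\<in>{..<n}-{k}. logistic_weight (z i) * \<bar>x i \<bullet> x k\<bar>)) \<le> z' k - z k"
    and upper: "z' k - z k \<le> \<alpha> / real n * (logistic_weight (z k) * norm (x k)^2
                   + (\<Sum>i\<in>{..<n}-{k}. logistic_weight (z i) * \<bar>x i \<bullet> x k\<bar>))"
  shows "4/5 * \<gamma>^2 * (\<alpha> / real n) * logistic_weight (z k) * norm (x k)^2 \<le> z' k - z k"
    and "z' k - z k \<le> 6/5 * (\<alpha> / real n) * logistic_weight (z k) * norm (x k)^2"
proof -
  define G where "G = logistic_weight (z k) * norm (x k)^2"
  define S where "S = (\<Sum>i\<in>{..<n}-{k}. logistic_weight (z i) * \<bar>x i \<bullet> x k\<bar>)"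
  have "S \<le> \<gamma>^2 / 5 * G"
    using cross_terms_le[OF bal C \<gamma>(1) k near] unfolding S_def G_def by (simp add: mult.assoc)
  moreover have "\<gamma>^2 * G \<le> 1 * G"
    using \<gamma> logistic_weight_pos[of "z k"] unfolding G_def by (intro mult_right_mono) (auto simp: power_le_one)
  ultimately have "4/5 * \<gamma>^2 * G \<le> \<gamma>^2 * G - S" "G + S \<le> 6/5 * G" by linarith+
  then have "\<alpha> / real n * (4/5 * \<gamma>^2 * G) \<le> \<alpha> / real n * (\<gamma>^2 * G - S)"
      "\<alpha> / real n * (G + S) \<le> \<alpha> / real n * (6/5 * G)"
    using \<alpha> by (intro mult_left_mono; simp)+
  with lower upper show "4/5 * \<gamma>^2 * (\<alpha> / real n) * logistic_weight (z k) * norm (x k)^2 \<le> z' k - z k"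
      "z' k - z k \<le> 6/5 * (\<alpha> / real n) * logistic_weight (z k) * norm (x k)^2"
    unfolding G_def S_def by (auto simp: mult.assoc mult.left_commute)
qed

lemma weight_growth_comparable:
  fixes A C R \<gamma> Ni Nj Di Dj zi zj :: real
  assumes A: "0 \<le> A" and C: "0 < C" "9 * R^2 \<le> C * \<gamma>^2" and N: "0 \<le> Ni" "Nj \<le> R^2 * Ni"
    and Dj: "Dj \<le> 6/5 * A * logistic_weight zj * Nj"
    and Di: "4/5 * \<gamma>^2 * A * logistic_weight zi * Ni \<le> Di"
  shows "6 * (1 + exp zj) * Dj \<le> C * (1 + exp zi) * Di"
proof -
  define qi qj where "qi = 1 + exp zi" and "qj = 1 + exp zj"
  have q: "0 < qi" "0 < qj" by (simp_all add: qi_def qj_def add_pos_pos)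
  then have qg: "qi * logistic_weight zi = 1" "qj * logistic_weight zj = 1"
    unfolding qi_def qj_def logistic_weight_def by simp_all
  have "6 * qj * Dj \<le> 6 * qj * (6/5 * A * logistic_weight zj * Nj)"
    using Dj q by (intro mult_left_mono) auto
  also have "\<dots> = 36/5 * A * Nj" using qg by (simp add: algebra_simps)
  also have "\<dots> \<le> 4/5 * A * (9 * R^2) * Ni"
    using N A by (simp add: mult_left_mono)
  also have "\<dots> \<le> 4/5 * A * (C * \<gamma>^2) * Ni"
    using C(2) A N(1) by (intro mult_right_mono mult_left_mono) auto
  also have "\<dots> = C * qi * (4/5 * \<gamma>^2 * A * logistic_weight zi * Ni)"
    using qg by (simp add: algebra_simps)
  also have "\<dots> \<le> C * qi * Di"
    using Di C(1) q by (intro mult_left_mono) auto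
  finally show ?thesis unfolding qi_def qj_def .
qed

lemma margins_balanced_step:
  fixes x :: "nat \<Rightarrow> 'a::real_normed_vector" and z z' :: "nat \<Rightarrow> real"
  assumes \<gamma>: "0 < \<gamma>" and C: "0 < C" "9 * R^2 \<le> C * \<gamma>^2"
    and norm_ratio: "\<forall>i<n. \<forall>j<n. norm (x j) \<le> R * norm (x i)"
    and \<alpha>: "0 \<le> \<alpha>" "\<forall>k<n. \<alpha> * norm (x k)^2 \<le> 1/4"
    and bal: "margins_balanced C n z"
    and incr: "\<forall>k<n. 4/5 * \<gamma>^2 * (\<alpha> / real n) * logistic_weight (z k) * norm (x k)^2 \<le> z' k - z k \<and>
                     z' k - z k \<le> 6/5 * (\<alpha> / real n) * logistic_weight (z k) * norm (x k)^2"
  shows "margins_balanced C n z'"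
proof -
  define A where "A = \<alpha> / real n"
  define D where "D k = z' k - z k" for k
  have A: "0 \<le> A" "A \<le> \<alpha>" if "k < n" for k
  proof -
    have "\<alpha> * 1 \<le> \<alpha> * real n" using that \<alpha>(1) by (intro mult_left_mono) auto
    then show "0 \<le> A" "A \<le> \<alpha>" using that \<alpha>(1) unfolding A_def by (auto simp: divide_le_eq)
  qed
  have D_nonneg: "0 \<le> D k" if "k < n" for k
  proof -
    have "0 \<le> 4/5 * \<gamma>^2 * (\<alpha> / real n) * logistic_weight (z k) * norm (x k)^2"
      using \<alpha>(1) logistic_weight_pos[of "z k"] by (intro mult_nonneg_nonneg) auto
    moreover have "4/5 * \<gamma>^2 * (\<alpha> / real n) * logistic_weight (z k) * norm (x k)^2 \<le> D k"
      using incr that unfolding D_def by blast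
    ultimately show ?thesis by linarith
  qed
  have D_half: "D k \<le> 1/2" if k: "k < n" for k
  proof -
    have "A * logistic_weight (z k) * norm (x k)^2 \<le> \<alpha> * 1 * norm (x k)^2"
      using A[OF k] logistic_weight_pos[of "z k"] logistic_weight_less_one[of "z k"]
      by (intro mult_right_mono mult_mono) auto
    moreover have "\<alpha> * norm (x k)^2 \<le> 1/4" using \<alpha>(2) k by blast
    moreover have "D k \<le> 6/5 * (A * logistic_weight (z k) * norm (x k)^2)"
      using incr k unfolding D_def A_def by (simp add: mult.assoc)
    ultimately show ?thesis by linarith
  qed
  have growth: "6 * (1 + exp (z j)) * D j \<le> C * (1 + exp (z i)) * D i" if "i < n" "j < n" for i j
  proof (rule weight_growth_comparable[OF A(1)[OF that(1)] C])
    have "norm (x j)^2 \<le> (R * norm (x i))^2"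
      using norm_ratio that by (intro power_mono) auto
    then show "norm (x j)^2 \<le> R^2 * norm (x i)^2" by (simp add: power_mult_distrib)
  qed (use incr that in \<open>auto simp: D_def A_def\<close>)
  show ?thesis
    unfolding margins_balanced_def
  proof (intro conjI allI impI)
    fix i assume i: "i < n"
    then have "- ln 2 \<le> z i" using bal unfolding margins_balanced_def by blast
    with D_nonneg[OF i] show "- ln 2 \<le> z' i" unfolding D_def by linarith
  next
    fix i j assume i: "i < n" and j: "j < n"
    have "1 + exp (z j + D j) \<le> C * (1 + exp (z i + D i))"
      using bal i j D_nonneg D_half growth unfolding margins_balanced_def
      by (intro weight_ratio_step) auto
    then show "1 + exp (z' j) \<le> C * (1 + exp (z' i))" unfolding D_def by simp
  qed
qed

lemma margins_balanced_init:
  assumes "\<forall>i<n. \<bar>z i\<bar> \<le> 1/2" and "3 \<le> C"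
  shows "margins_balanced C n z"
  unfolding margins_balanced_def
proof (intro conjI allI impI)
  have "1/2 \<le> ln (2::real)"
  proof -
    have "exp (1/2::real) \<le> 2" using real_exp_bound_lemma[of "1/2"] by simp
    then show ?thesis using ln_ge_iff[of 2 "1/2"] by simp
  qed
  moreover have z: "- (1/2) \<le> z i" "z i \<le> 1/2" if "i < n" for i
    using assms(1) that unfolding abs_le_iff by auto
  ultimately show "- ln 2 \<le> z i" if "i < n" for i
    using that by (meson order_trans neg_le_iff_le)
  fix i j assume "i < n" "j < n"
  have "exp (z j) \<le> exp (1/2)" using z(2)[OF \<open>j < n\<close>] by simp
  also have "\<dots> \<le> 2" using real_exp_bound_lemma[of "1/2"] by simp
  finally have "1 + exp (z j) \<le> 3 * 1" by simp
  also have "\<dots> \<le> C * (1 + exp (z i))"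
    using assms(2) by (intro mult_mono) (auto simp: add_nonneg_nonneg)
  finally show "1 + exp (z j) \<le> C * (1 + exp (z i))" .
qed

lemma gd_logistic_deriv_ratio_le:
  fixes W0 :: "real^'d::finite^'m::finite" and x :: "nat \<Rightarrow> real^'d"
  assumes act: "leaky_smooth \<phi> \<gamma> H"
    and a2: "\<forall>j. (a j)^2 = 1 / real CARD('m)"
    and y: "\<forall>i<n. y i = 1 \<or> y i = -1"
    and C: "9 * R^2 \<le> C * \<gamma>^2" "3 \<le> C"
    and near: "\<forall>i<n. \<forall>k<n. k \<noteq> i \<longrightarrow> norm (x i)^2 \<ge> 5 / \<gamma>^2 * C * real n * \<bar>x i \<bullet> x k\<bar>"
    and norm_ratio: "\<forall>i<n. \<forall>j<n. norm (x j) \<le> R * norm (x i)"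
    and \<alpha>: "0 \<le> \<alpha>" "\<forall>k<n. \<alpha> * norm (x k)^2 \<le> 1/4"
    and init: "\<forall>k<n. \<bar>net \<phi> a W0 (x k)\<bar> \<le> 1/2"
    and ij: "i < n" "j < n"
  shows "deriv logistic (y i * net \<phi> a (gd_iter (emp_risk \<phi> a n x y) \<alpha> W0 t) (x i))
       / deriv logistic (y j * net \<phi> a (gd_iter (emp_risk \<phi> a n x y) \<alpha> W0 t) (x j)) \<le> C"
proof -
  define z where "z t i = y i * net \<phi> a (gd_iter (emp_risk \<phi> a n x y) \<alpha> W0 t) (x i)" for t i
  have \<gamma>: "0 < \<gamma>" "\<gamma> \<le> 1" using act unfolding leaky_smooth_def by auto
  have "margins_balanced C n (z t)"
  proof (induction t)
    case 0
    have "\<bar>y i\<bar> = 1" if "i < n" for i using y that by auto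
    then show ?case
      using init C(2) by (intro margins_balanced_init) (simp_all add: z_def abs_mult)
  next
    case (Suc t)
    have C0: "0 < C" using C(2) by simp
    have "4/5 * \<gamma>^2 * (\<alpha> / real n) * logistic_weight (z t k) * norm (x k)^2 \<le> z (Suc t) k - z t k \<and>
          z (Suc t) k - z t k \<le> 6/5 * (\<alpha> / real n) * logistic_weight (z t k) * norm (x k)^2"
      if k: "k < n" for k
      using margin_increment_bounds[OF act a2 y k \<alpha>(1) gd_iter.simps(2)]
      by (intro conjI margin_increment_bounds_balanced[OF \<gamma> C0 near Suc k \<alpha>(1)]) (simp_all add: z_def)
    then show ?case
      by (intro margins_balanced_step[OF \<gamma>(1) C0 C(1) norm_ratio \<alpha> Suc]) auto
  qed
  then show ?thesis
    using ij unfolding deriv_logistic_ratio margins_balanced_def z_def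
    by (simp add: add_pos_pos divide_le_eq)
qed

lemma normal_density_mult_exp_square:
  assumes "0 < \<omega>"
  shows "normal_density 0 \<omega> z * exp (z\<^sup>2 / (4 * \<omega>\<^sup>2)) = sqrt 2 * normal_density 0 (sqrt 2 * \<omega>) z"
proof -
  have "(sqrt 2 * \<omega>)\<^sup>2 = 2 * \<omega>\<^sup>2" by (simp add: power_mult_distrib)
  then have "-(z - 0)\<^sup>2 / (2 * \<omega>\<^sup>2) + z\<^sup>2 / (4 * \<omega>\<^sup>2) = -(z - 0)\<^sup>2 / (2 * (sqrt 2 * \<omega>)\<^sup>2)"
    using assms by (simp add: divide_simps)
  then have e: "exp (-(z - 0)\<^sup>2 / (2 * \<omega>\<^sup>2)) * exp (z\<^sup>2 / (4 * \<omega>\<^sup>2)) = exp (-(z - 0)\<^sup>2 / (2 * (sqrt 2 * \<omega>)\<^sup>2))"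
    by (metis exp_add)
  have "sqrt (2 * (pi * (sqrt 2 * \<omega>)\<^sup>2)) = sqrt 2 * sqrt (2 * (pi * \<omega>\<^sup>2))"
    by (simp add: power_mult_distrib real_sqrt_mult[symmetric] ac_simps)
  then have c: "1 / sqrt (2 * (pi * \<omega>\<^sup>2)) = sqrt 2 * (1 / sqrt (2 * (pi * (sqrt 2 * \<omega>)\<^sup>2)))"
    by simp
  show ?thesis unfolding normal_density_def mult.assoc e c by (rule refl)
qed

lemma nn_integral_exp_square_normal:
  assumes \<omega>: "0 < \<omega>"
  shows "(\<integral>\<^sup>+ z. ennreal (exp (z^2 / (4 * \<omega>^2))) \<partial>(density lborel (normal_density 0 \<omega>))) = ennreal (sqrt 2)"
proof -
  have "(\<integral>\<^sup>+ z. ennreal (exp (z^2 / (4 * \<omega>^2))) \<partial>(density lborel (normal_density 0 \<omega>)))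
      = (\<integral>\<^sup>+ z. ennreal (normal_density 0 \<omega> z * exp (z^2 / (4 * \<omega>^2))) \<partial>lborel)"
    by (subst nn_integral_density) (auto simp: ennreal_mult'[symmetric])
  also have "\<dots> = (\<integral>\<^sup>+ z. ennreal (sqrt 2) * ennreal (normal_density 0 (sqrt 2 * \<omega>) z) \<partial>lborel)"
    unfolding normal_density_mult_exp_square[OF \<omega>] by (simp add: ennreal_mult')
  also have "\<dots> = ennreal (sqrt 2) * (\<integral>\<^sup>+ z. ennreal (normal_density 0 (sqrt 2 * \<omega>) z) \<partial>lborel)"
    by (subst nn_integral_cmult) auto
  also have "(\<integral>\<^sup>+ z. ennreal (normal_density 0 (sqrt 2 * \<omega>) z) \<partial>lborel) = 1"
    using \<omega> nn_integral_eq_integral[OF integrable_normal_density[where \<mu>=0 and \<sigma>="sqrt 2 * \<omega>"]]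
      integral_normal_density[where \<mu>=0 and \<sigma>="sqrt 2 * \<omega>"]
    by simp
  finally show ?thesis by simp
qed

lemma measurable_PiM_component_borel:
  assumes "sets M = sets borel" and "p \<in> I"
  shows "(\<lambda>f. f p) \<in> borel_measurable (PiM I (\<lambda>_. M))"
proof -
  have "measurable (PiM I (\<lambda>_. M)) M = measurable (PiM I (\<lambda>_. M)) borel"
    using assms(1) by (rule measurable_cong_sets[OF refl])
  then show ?thesis using measurable_component_singleton[OF assms(2), of "\<lambda>_. M"] by simp
qed

lemma PiM_normal_sum_squares_tail:
  assumes I: "finite I" and \<omega>: "0 < \<omega>"
  defines "P \<equiv> PiM I (\<lambda>_. density lborel (normal_density 0 \<omega>))"
  shows "emeasure P {f \<in> space P. b \<le> (\<Sum>p\<in>I. (f p)^2)}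
           \<le> ennreal (sqrt 2 ^ card I * exp (- (b / (4 * \<omega>^2))))"
proof -
  define N where "N = density lborel (normal_density 0 \<omega>)"
  define S where "S f = (\<Sum>p\<in>I. (f p)^2)" for f :: "'a \<Rightarrow> real"
  define s where "s = 1 / (4 * \<omega>^2)"
  interpret product_sigma_finite "\<lambda>_. N"
    unfolding product_sigma_finite_def N_def
    using prob_space_normal_density[OF \<omega>] by (simp add: prob_space_imp_sigma_finite)
  have [measurable]: "(\<lambda>f. f p) \<in> borel_measurable P" if "p \<in> I" for p
    unfolding P_def using that by (intro measurable_PiM_component_borel) auto
  have "(\<integral>\<^sup>+ f. ennreal (exp (s * S f)) * indicator (space P) f \<partial>P)
      = (\<integral>\<^sup>+ f. (\<Prod>p\<in>I. ennreal (exp ((f p)^2 / (4 * \<omega>^2)))) \<partial>P)"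
    unfolding S_def s_def sum_distrib_left exp_sum[OF I]
    by (intro nn_integral_cong) (simp add: prod_ennreal)
  also have "\<dots> = (\<Prod>p\<in>I. \<integral>\<^sup>+ u. ennreal (exp (u^2 / (4 * \<omega>^2))) \<partial>N)"
    unfolding P_def N_def[symmetric] using I by (intro product_nn_integral_prod) (auto simp: N_def)
  also have "\<dots> = ennreal (sqrt 2 ^ card I)"
    unfolding N_def nn_integral_exp_square_normal[OF \<omega>] by (simp add: prod_ennreal ennreal_power)
  finally have "(\<integral>\<^sup>+ f. ennreal (exp (s * S f)) * indicator (space P) f \<partial>P) = ennreal (sqrt 2 ^ card I)" .
  moreover have "emeasure P {f \<in> space P. b \<le> S f}
      \<le> ennreal (exp (- s * b)) * (\<integral>\<^sup>+ f. ennreal (exp (s * S f)) * indicator (space P) f \<partial>P)"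
    unfolding S_def s_def using I \<omega> by (intro Chernoff_ineq_nn_integral_ge) auto
  ultimately show ?thesis
    unfolding S_def s_def by (simp add: ennreal_mult'[symmetric] mult.commute)
qed

lemma power2_norm_vec_of_pairs:
  fixes f :: "'m::finite \<times> 'd::finite \<Rightarrow> real"
  shows "(norm ((\<chi> j k. f (j, k)) :: real^'d^'m))^2 = (\<Sum>p\<in>UNIV. (f p)^2)"
proof -
  have "(norm ((\<chi> j k. f (j, k)) :: real^'d^'m))^2 = (\<Sum>j\<in>UNIV. \<Sum>k\<in>UNIV. (f (j, k))^2)"
    unfolding norm_vec_def L2_set_def by (simp add: sum_nonneg)
  then show ?thesis by (simp add: sum.cartesian_product UNIV_Times_UNIV)
qed

lemma measurable_vec_of_pairs:
  assumes "sets M = sets borel"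
  shows "(\<lambda>f. (\<chi> j k. f (j, k)) :: real^'d::finite^'m::finite) \<in> borel_measurable (PiM UNIV (\<lambda>_. M))"
proof (subst borel_measurable_euclidean_space, intro ballI)
  fix c :: "real^'d^'m"
  have [measurable]: "(\<lambda>f. f p) \<in> borel_measurable (PiM UNIV (\<lambda>_. M))" for p :: "'m \<times> 'd"
    using assms by (intro measurable_PiM_component_borel) auto
  have "(\<lambda>f. \<Sum>j\<in>UNIV. \<Sum>k\<in>UNIV. f (j, k) * (c $ j $ k)) \<in> borel_measurable (PiM UNIV (\<lambda>_. M))"
    by measurable
  then show "(\<lambda>f. (\<chi> j k. f (j, k)) \<bullet> c) \<in> borel_measurable (PiM UNIV (\<lambda>_. M))"
    by (simp add: inner_vec_def)
qed

lemma init_measure_norm_le: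
  fixes \<omega> b :: real
  assumes \<omega>: "0 < \<omega>" and b: "0 \<le> b"
  defines "\<mu> \<equiv> init_measure \<omega> :: (real^'d::finite^'m::finite) measure"
  shows "{W. norm W \<le> b} \<in> sets \<mu>"
    and "1 - sqrt 2 ^ (CARD('m) * CARD('d)) * exp (- (b^2 / (4 * \<omega>^2))) \<le> measure \<mu> {W. norm W \<le> b}"
proof -
  define P where "P = PiM (UNIV :: ('m \<times> 'd) set) (\<lambda>_. density lborel (normal_density 0 \<omega>))"
  define chi :: "('m \<times> 'd \<Rightarrow> real) \<Rightarrow> real^'d^'m" where "chi f = (\<chi> j k. f (j, k))" for f
  define S where "S f = (\<Sum>p\<in>UNIV. (f p)^2)" for f :: "'m \<times> 'd \<Rightarrow> real"
  have \<mu>: "\<mu> = distr P borel chi"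
    unfolding \<mu>_def init_measure_def P_def chi_def ..
  interpret P: prob_space P
    unfolding P_def using prob_space_normal_density[OF \<omega>] by (intro prob_space_PiM) auto
  have chi: "chi \<in> borel_measurable P"
    unfolding chi_def P_def by (intro measurable_vec_of_pairs) simp
  have [measurable]: "(\<lambda>f. f p) \<in> borel_measurable P" for p
    unfolding P_def by (intro measurable_PiM_component_borel) auto
  have E: "{W :: real^'d^'m. norm W \<le> b} \<in> sets borel"
    using closed_cball[of "0 :: real^'d^'m" b] by (simp add: cball_def)
  then show "{W. norm W \<le> b} \<in> sets \<mu>" unfolding \<mu> by simp
  have "chi -` (UNIV - {W. norm W \<le> b}) \<inter> space P \<subseteq> {f \<in> space P. b^2 \<le> S f}"
  proof safe
    fix f assume "f \<in> space P" "\<not> norm (chi f) \<le> b"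
    then have "b^2 \<le> (norm (chi f))^2" using b by (intro power_mono) auto
    then show "b^2 \<le> S f" unfolding chi_def S_def power2_norm_vec_of_pairs .
  qed
  moreover have "{f \<in> space P. b^2 \<le> S f} \<in> sets P"
    unfolding S_def by measurable
  ultimately have "measure \<mu> (UNIV - {W. norm W \<le> b}) \<le> measure P {f \<in> space P. b^2 \<le> S f}"
    unfolding \<mu> using E chi by (subst measure_distr) (auto intro!: P.finite_measure_mono)
  also have "\<dots> \<le> sqrt 2 ^ (CARD('m) * CARD('d)) * exp (- (b^2 / (4 * \<omega>^2)))"
    using PiM_normal_sum_squares_tail[OF finite \<omega>, of "UNIV :: ('m \<times> 'd) set" "b^2"]
    unfolding P_def[symmetric] S_def[symmetric] P.emeasure_eq_measure by simp
  finally show "1 - sqrt 2 ^ (CARD('m) * CARD('d)) * exp (- (b^2 / (4 * \<omega>^2))) \<le> measure \<mu> {W. norm W \<le> b}"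
    using prob_space.prob_compl[OF P.prob_space_distr[OF chi], of "{W. norm W \<le> b}"] E
    unfolding \<mu> by simp
qed

lemma leaky_smooth_abs_le:
  assumes "leaky_smooth \<phi> \<gamma> H"
  shows "\<bar>\<phi> u\<bar> \<le> \<bar>u\<bar>"
proof -
  obtain c where c: "\<gamma> \<le> c" "c \<le> 1" "\<phi> u - \<phi> 0 = c * (u - 0)"
    using leaky_smooth_secant[OF assms] .
  moreover have "\<phi> 0 = 0" "0 < \<gamma>" using assms unfolding leaky_smooth_def by auto
  ultimately have "\<bar>\<phi> u\<bar> = c * \<bar>u\<bar>" by (simp add: abs_mult)
  also have "\<dots> \<le> 1 * \<bar>u\<bar>" using c by (intro mult_right_mono) auto
  finally show ?thesis by simp
qed

lemma net_abs_le:
  fixes W :: "real^'d::finite^'m::finite"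
  assumes act: "leaky_smooth \<phi> \<gamma> H"
    and a2: "\<forall>j. (a j)^2 = 1 / real CARD('m)"
  shows "\<bar>net \<phi> a W v\<bar> \<le> norm W * norm v"
proof -
  have a: "\<bar>a j\<bar> = 1 / sqrt (real CARD('m))" for j
    using arg_cong[OF a2[rule_format, of j], of sqrt] by (simp add: real_sqrt_divide)
  have "\<bar>net \<phi> a W v\<bar> \<le> (\<Sum>j\<in>UNIV. \<bar>a j\<bar> * \<bar>\<phi> (W$j \<bullet> v)\<bar>)"
    unfolding net_def abs_mult[symmetric] by (rule sum_abs)
  also have "\<dots> \<le> (\<Sum>j\<in>UNIV. 1 / sqrt (real CARD('m)) * (norm (W$j) * norm v))"
  proof (rule sum_mono)
    fix j
    have "\<bar>\<phi> (W$j \<bullet> v)\<bar> \<le> norm (W$j) * norm v"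
      using leaky_smooth_abs_le[OF act] Cauchy_Schwarz_ineq2 order_trans by blast
    then show "\<bar>a j\<bar> * \<bar>\<phi> (W$j \<bullet> v)\<bar> \<le> 1 / sqrt (real CARD('m)) * (norm (W$j) * norm v)"
      by (simp add: a divide_right_mono)
  qed
  also have "\<dots> = 1 / sqrt (real CARD('m)) * norm v * (\<Sum>j\<in>UNIV. norm (W$j) * 1)"
    by (simp add: sum_distrib_left sum_divide_distrib algebra_simps)
  also have "\<dots> \<le> 1 / sqrt (real CARD('m)) * norm v * (L2_set (\<lambda>j. norm (W$j)) UNIV * L2_set (\<lambda>_. 1) (UNIV :: 'm set))"
    using L2_set_mult_ineq[of "\<lambda>j. norm (W$j)" "\<lambda>_. 1::real" UNIV] by (intro mult_left_mono) auto
  also have "\<dots> = norm W * norm v"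
    by (simp add: norm_vec_def L2_set_constant)
  finally show ?thesis .
qed

lemma Max_lessThan_ge:
  fixes f :: "nat \<Rightarrow> 'a::linorder"
  shows "i < n \<Longrightarrow> f i \<le> Max {f i | i. i < n}"
  by (intro Max_ge) auto

lemma Min_lessThan_le:
  fixes f :: "nat \<Rightarrow> 'a::linorder"
  shows "i < n \<Longrightarrow> Min {f i | i. i < n} \<le> f i"
  by (intro Min_le) auto

lemma Min_lessThan_in:
  fixes f :: "nat \<Rightarrow> 'a::linorder"
  assumes "0 < n"
  obtains i where "i < n" "Min {f i | i. i < n} = f i"
proof -
  have "Min {f i | i. i < n} \<in> {f i | i. i < n}"
    using assms by (intro Min_in) auto
  then show ?thesis using that by blast
qed

lemma Max_lessThan_pairs_ge:
  fixes f :: "nat \<Rightarrow> nat \<Rightarrow> 'a::linorder"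
  assumes "i < n" "j < n"
  shows "f i j \<le> Max {f i j | i j. i < n \<and> j < n}"
proof -
  have "{f i j | i j. i < n \<and> j < n} = (\<lambda>(i, j). f i j) ` ({..<n} \<times> {..<n})" by auto
  then show ?thesis using assms by (intro Max_ge) auto
qed

lemma sample_norm_bounds:
  fixes x :: "nat \<Rightarrow> 'a::real_normed_vector"
  assumes R_def: "R = Max {norm (x i) / norm (x j) | i j. i < n \<and> j < n}"
    and Rmax_def: "Rmax = Max {norm (x i) | i. i < n}"
    and Rmin_def: "Rmin = Min {norm (x i) | i. i < n}"
    and Rmin: "0 < Rmin" and n: "0 < n"
  shows "\<forall>i<n. Rmin \<le> norm (x i) \<and> norm (x i) \<le> Rmax"
    and "\<forall>i<n. \<forall>j<n. norm (x j) \<le> R * norm (x i)"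
    and "1 \<le> R"
proof -
  show bounds: "\<forall>i<n. Rmin \<le> norm (x i) \<and> norm (x i) \<le> Rmax"
  proof (intro allI impI conjI)
    fix i assume "i < n"
    then show "Rmin \<le> norm (x i)" "norm (x i) \<le> Rmax"
      unfolding Rmin_def Rmax_def
      by (rule Min_lessThan_le[where f = "\<lambda>i. norm (x i)"], rule Max_lessThan_ge[where f = "\<lambda>i. norm (x i)"])
  qed
  have pos: "0 < norm (x i)" if "i < n" for i
    using bounds Rmin that by (meson less_le_trans)
  have ratio: "norm (x j) / norm (x i) \<le> R" if "i < n" "j < n" for i j
    unfolding R_def by (rule Max_lessThan_pairs_ge[where f = "\<lambda>i j. norm (x i) / norm (x j)", OF that(2,1)])
  show "\<forall>i<n. \<forall>j<n. norm (x j) \<le> R * norm (x i)"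
    using ratio pos by (simp add: divide_le_eq)
  show "1 \<le> R" using ratio[OF n n] pos[OF n] by simp
qed

lemma step_size_bound:
  assumes A1: "\<alpha> \<le> \<gamma>^2 / (5 * real n * Rmax^2 * R^2 * C * max 1 H)"
    and \<gamma>: "\<gamma>^2 \<le> 1" and n: "1 \<le> n" and R: "1 \<le> R" and C: "10 \<le> C" and Rmax: "0 < Rmax"
  shows "\<alpha> * Rmax^2 \<le> 1/50"
proof -
  define D where "D = 5 * real n * Rmax^2 * R^2 * C * max 1 H"
  have "1 * 1 \<le> real n * R^2"
    using n R by (intro mult_mono) (auto simp: one_le_power)
  then have "1 * 10 * 1 \<le> (real n * R^2) * C * max 1 H"
    using C by (intro mult_mono) auto
  then have D: "50 * Rmax^2 \<le> D"
    unfolding D_def using mult_left_mono[of 10 "real n * R^2 * C * max 1 H" "5 * Rmax^2"]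
    by (simp add: algebra_simps)
  have D_pos: "0 < 50 * Rmax^2" using Rmax by simp
  have "\<gamma>^2 / D \<le> 1 / D"
    using \<gamma> D D_pos by (intro divide_right_mono) linarith+
  with A1 have "\<alpha> \<le> 1 / D" unfolding D_def by linarith
  also have "\<dots> \<le> 1 / (50 * Rmax^2)"
    using D D_pos by (intro divide_left_mono mult_pos_pos) linarith+
  finally show ?thesis using Rmax by (simp add: field_simps)
qed

lemma init_scale_bound:
  assumes A2: "\<omega> \<le> \<alpha> * \<gamma>^2 * Rmin / (72 * R * C * real n * s)"
    and \<omega>: "0 < \<omega>" and \<gamma>: "\<gamma>^2 \<le> 1" and \<alpha>: "0 \<le> \<alpha>" "\<alpha> * Rmax^2 \<le> 1/50"
    and Rmin: "0 \<le> Rmin" "Rmin \<le> Rmax" and R: "1 \<le> R" and C: "10 \<le> C" and n: "1 \<le> n"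
  shows "2 * \<omega> * s * Rmax \<le> 1/2"
proof (cases "0 < s")
  case True
  have "1 * 10 * 1 \<le> R * C * real n"
    using R C n by (intro mult_mono) auto
  then have "720 \<le> 72 * R * C * real n"
    by (simp only: mult.assoc)
  then have "720 * (\<omega> * s) \<le> (72 * R * C * real n) * (\<omega> * s)"
    using \<omega> True by (intro mult_right_mono) auto
  also have "\<dots> = \<omega> * (72 * R * C * real n * s)" by (simp only: ac_simps)
  also have "\<dots> \<le> \<alpha> * \<gamma>^2 * Rmin"
  proof -
    have "0 < 72 * R * C * real n * s"
      using True \<open>720 \<le> 72 * R * C * real n\<close> by simp
    then show ?thesis using A2 by (simp add: pos_le_divide_eq)
  qed
  also have "\<dots> \<le> \<alpha> * 1 * Rmax"
    using \<alpha> \<gamma> Rmin by (intro mult_mono) auto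
  finally have "720 * (\<omega> * s) * Rmax \<le> \<alpha> * Rmax * Rmax"
    using Rmin by (intro mult_right_mono) auto
  then show ?thesis using \<alpha> by (simp add: power2_eq_square algebra_simps)
next
  case False
  then have "\<omega> * s * Rmax \<le> 0"
    using \<omega> Rmin by (intro mult_nonpos_nonneg mult_nonneg_nonpos) auto
  then show ?thesis by simp
qed

lemma gaussian_tail_le:
  fixes k :: nat and \<delta> L :: real
  assumes k: "1 \<le> k" and \<delta>: "0 < \<delta>" "\<delta> < 1" and L: "ln (4 / \<delta>) \<le> L"
  shows "sqrt 2 ^ k * exp (- (real k * L)) \<le> \<delta>"
proof -
  have "sqrt 2 \<le> sqrt (2^2 :: real)" by (subst real_sqrt_le_iff) simp
  then have "sqrt 2 ^ k \<le> (2::real) ^ k" by (intro power_mono) auto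
  also have "\<dots> = exp (real k * ln 2)" by (simp add: exp_of_nat_mult)
  finally have "sqrt 2 ^ k * exp (- (real k * L)) \<le> exp (real k * ln 2) * exp (- (real k * L))"
    by (simp add: mult_right_mono)
  also have "\<dots> = exp (real k * (ln 2 - L))"
    by (simp add: exp_add[symmetric] algebra_simps)
  also have "\<dots> \<le> exp (real k * ln \<delta>)"
  proof -
    have "ln (4::real) = 2 * ln 2" using ln_realpow[of 2 2] by simp
    then have "2 * ln 2 - ln \<delta> \<le> L" using L \<delta> by (simp add: ln_div)
    moreover have "0 < ln (2::real)" by simp
    ultimately have "ln 2 - L \<le> ln \<delta>" by linarith
    then show ?thesis by (simp add: mult_left_mono)
  qed
  also have "\<dots> \<le> exp (1 * ln \<delta>)"
    using k \<delta> by (intro exp_mono mult_right_mono_neg) auto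
  finally show ?thesis using \<delta> by simp
qed

lemma step_size_and_init_scale_bounds:
  fixes x :: "nat \<Rightarrow> 'a::real_normed_vector"
  assumes R_def: "R = Max {norm (x i) / norm (x j) | i j. i < n \<and> j < n}"
    and Rmax_def: "Rmax = Max {norm (x i) | i. i < n}"
    and Rmin_def: "Rmin = Min {norm (x i) | i. i < n}"
    and n: "1 \<le> n" and \<gamma>: "\<gamma>^2 \<le> 1" and C: "10 \<le> C" and \<alpha>: "0 < \<alpha>" and \<omega>: "0 < \<omega>"
    and A1: "\<alpha> \<le> \<gamma>^2 / (5 * real n * Rmax^2 * R^2 * C * max 1 H)"
    and A2: "\<omega> \<le> \<alpha> * \<gamma>^2 * Rmin / (72 * R * C * real n * s)"
  shows "\<forall>i<n. \<forall>j<n. norm (x j) \<le> R * norm (x i)"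
    and "\<forall>k<n. \<alpha> * norm (x k)^2 \<le> 1/4"
    and "\<forall>k<n. 2 * \<omega> * s * norm (x k) \<le> 1/2"
proof -
  have n0: "0 < n" using n by simp
  obtain i0 where "i0 < n" "Rmin = norm (x i0)"
    unfolding Rmin_def by (rule Min_lessThan_in[where f = "\<lambda>i. norm (x i)", OF n0])
  moreover have "Rmin \<noteq> 0"
  proof
    assume "Rmin = 0" with A2 \<omega> show False by simp
  qed
  ultimately have Rmin: "0 < Rmin" by simp
  note norms = sample_norm_bounds[OF R_def Rmax_def Rmin_def Rmin n0]
  then show "\<forall>i<n. \<forall>j<n. norm (x j) \<le> R * norm (x i)" by blast
  have "Rmin \<le> norm (x 0) \<and> norm (x 0) \<le> Rmax" using norms(1) n0 by blast
  then have Rmax: "0 < Rmax" "Rmin \<le> Rmax" using Rmin by linarith+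
  have step: "\<alpha> * Rmax^2 \<le> 1/50"
    by (rule step_size_bound[OF A1 \<gamma> n norms(3) C Rmax(1)])
  show "\<forall>k<n. \<alpha> * norm (x k)^2 \<le> 1/4"
  proof (intro allI impI)
    fix k assume "k < n"
    then have "\<alpha> * norm (x k)^2 \<le> \<alpha> * Rmax^2"
      using norms(1) \<alpha> by (intro mult_left_mono power_mono) auto
    then show "\<alpha> * norm (x k)^2 \<le> 1/4" using step by linarith
  qed
  have scale: "2 * \<omega> * s * Rmax \<le> 1/2"
    using Rmin Rmax(2) by (intro init_scale_bound[OF A2 \<omega> \<gamma> less_imp_le[OF \<alpha>] step _ _ norms(3) C n]) auto
  show "\<forall>k<n. 2 * \<omega> * s * norm (x k) \<le> 1/2"
  proof (intro allI impI)
    fix k assume k: "k < n"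
    show "2 * \<omega> * s * norm (x k) \<le> 1/2"
    proof (cases "0 \<le> s")
      case True
      then have "2 * \<omega> * s * norm (x k) \<le> 2 * \<omega> * s * Rmax"
        using k norms(1) \<omega> by (intro mult_left_mono) auto
      with scale show ?thesis by linarith
    next
      case False
      then have "2 * \<omega> * s * norm (x k) \<le> 0"
        using \<omega> by (intro mult_nonpos_nonneg mult_nonneg_nonpos) auto
      then show ?thesis by linarith
    qed
  qed
qed

lemma init_measure_norm_le_whp:
  fixes \<omega> \<delta> :: real
  assumes \<omega>: "0 < \<omega>" and \<delta>: "0 < \<delta>" "\<delta> < 1"
  defines "b \<equiv> 2 * \<omega> * sqrt (real CARD('m) * real CARD('d) * ln (4 * real CARD('m) / \<delta>))"
  shows "{W. norm W \<le> b} \<in> sets (init_measure \<omega> :: (real^'d::finite^'m::finite) measure)"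
    and "1 - \<delta> \<le> measure (init_measure \<omega> :: (real^'d::finite^'m::finite) measure) {W. norm W \<le> b}"
proof -
  define L where "L = ln (4 * real CARD('m) / \<delta>)"
  have "ln (4 / \<delta>) \<le> L"
    unfolding L_def using \<delta> by (intro ln_mono) (auto simp: divide_right_mono)
  moreover have "0 < ln (4 / \<delta>)" using \<delta> by simp
  ultimately have L: "ln (4 / \<delta>) \<le> L" "0 \<le> L" by linarith+
  have b: "0 \<le> b" unfolding b_def L_def[symmetric] using \<omega> L by simp
  have "b^2 / (4 * \<omega>^2) = real (CARD('m) * CARD('d)) * L"
    unfolding b_def L_def[symmetric] using \<omega> L by (simp add: power_mult_distrib)
  then have "sqrt 2 ^ (CARD('m) * CARD('d)) * exp (- (b^2 / (4 * \<omega>^2))) \<le> \<delta>"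
    using gaussian_tail_le[OF _ \<delta> L(1), of "CARD('m) * CARD('d)"] by simp
  moreover have "1 - sqrt 2 ^ (CARD('m) * CARD('d)) * exp (- (b^2 / (4 * \<omega>^2)))
      \<le> measure (init_measure \<omega> :: (real^'d::finite^'m::finite) measure) {W. norm W \<le> b}"
    by (rule init_measure_norm_le(2)[OF \<omega> b])
  ultimately show "1 - \<delta> \<le> measure (init_measure \<omega> :: (real^'d::finite^'m::finite) measure) {W. norm W \<le> b}"
    by linarith
  show "{W. norm W \<le> b} \<in> sets (init_measure \<omega> :: (real^'d::finite^'m::finite) measure)"
    by (rule init_measure_norm_le(1)[OF \<omega> b])
qed

theorem mainTheorem7:
  fixes \<phi> :: "real \<Rightarrow> real" and \<gamma> H :: real
    and a :: "'m::finite \<Rightarrow> real"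
    and n :: nat and x :: "nat \<Rightarrow> real^'d::finite" and y :: "nat \<Rightarrow> real"
    and \<alpha> \<omega> \<delta> R Rmax Rmin CR :: real
  assumes act: "leaky_smooth \<phi> \<gamma> H"
    and a_def: "\<forall>j. a j = 1 / sqrt (real CARD('m)) \<or> a j = - 1 / sqrt (real CARD('m))"
    and n_pos: "n \<ge> 1"
    and y_def: "\<forall>i<n. y i = 1 \<or> y i = -1"
    and R_def: "R = Max {norm (x i) / norm (x j) | i j. i < n \<and> j < n}"
    and Rmax_def: "Rmax = Max {norm (x i) | i. i < n}"
    and Rmin_def: "Rmin = Min {norm (x i) | i. i < n}"
    and CR_def: "CR = 10 * R^2 / \<gamma>^2 + 10"
    and near_orth: "\<forall>i<n. \<forall>k<n. k \<noteq> i \<longrightarrow>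
         norm (x i)^2 \<ge> 5 / \<gamma>^2 * CR * real n * \<bar>x i \<bullet> x k\<bar>"
    and delta: "0 < \<delta>" "\<delta> < 1"
    and alpha_pos: "0 < \<alpha>"
    and A1: "\<alpha> \<le> \<gamma>^2 / (5 * real n * Rmax^2 * R^2 * CR * max 1 H)"
    and omega_pos: "0 < \<omega>"
    and A2: "\<omega> \<le> \<alpha> * \<gamma>^2 * Rmin /
         (72 * R * CR * real n * sqrt (real CARD('m) * real CARD('d) * ln (4 * real CARD('m) / \<delta>)))"
  shows "\<exists>E \<in> sets (init_measure \<omega> :: (real^'d^'m) measure).
           measure (init_measure \<omega>) E \<ge> 1 - \<delta> \<and>
           (\<forall>W0\<in>E. \<forall>t. \<forall>i<n. \<forall>j<n.
              deriv logistic (y i * net \<phi> a (gd_iter (emp_risk \<phi> a n x y) \<alpha> W0 t) (x i))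
              / deriv logistic (y j * net \<phi> a (gd_iter (emp_risk \<phi> a n x y) \<alpha> W0 t) (x j))
              \<le> CR)"
proof -
  define s where "s = sqrt (real CARD('m) * real CARD('d) * ln (4 * real CARD('m) / \<delta>))"
  have \<gamma>: "0 < \<gamma>" "\<gamma>^2 \<le> 1" using act unfolding leaky_smooth_def by (auto simp: power_le_one)
  have CR: "9 * R^2 \<le> CR * \<gamma>^2" "3 \<le> CR" "10 \<le> CR"
    using \<gamma> unfolding CR_def by (simp_all add: field_simps)
  have a2: "\<forall>j. (a j)^2 = 1 / real CARD('m)"
  proof
    fix j show "(a j)^2 = 1 / real CARD('m)"
      using a_def[rule_format, of j] by (elim disjE) (simp_all add: power_divide)
  qed
  note bounds = step_size_and_init_scale_bounds[OF R_def Rmax_def Rmin_def n_pos \<gamma>(2) CR(3) alpha_pos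
      omega_pos A1 A2[folded s_def]]
  have "\<forall>W0\<in>{W. norm W \<le> 2 * \<omega> * s}. \<forall>t. \<forall>i<n. \<forall>j<n.
          deriv logistic (y i * net \<phi> a (gd_iter (emp_risk \<phi> a n x y) \<alpha> W0 t) (x i))
          / deriv logistic (y j * net \<phi> a (gd_iter (emp_risk \<phi> a n x y) \<alpha> W0 t) (x j)) \<le> CR"
  proof (intro ballI allI impI)
    fix W0 :: "real^'d^'m" and t i j assume W0: "W0 \<in> {W. norm W \<le> 2 * \<omega> * s}" and ij: "i < n" "j < n"
    have "\<bar>net \<phi> a W0 (x k)\<bar> \<le> 1/2" if k: "k < n" for k
    proof -
      have "norm W0 * norm (x k) \<le> 2 * \<omega> * s * norm (x k)"
        using W0 by (intro mult_right_mono) auto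
      also have "\<dots> \<le> 1/2" using bounds(3) k by blast
      finally show ?thesis using net_abs_le[OF act a2, of W0 "x k"] by linarith
    qed
    then show "deriv logistic (y i * net \<phi> a (gd_iter (emp_risk \<phi> a n x y) \<alpha> W0 t) (x i))
          / deriv logistic (y j * net \<phi> a (gd_iter (emp_risk \<phi> a n x y) \<alpha> W0 t) (x j)) \<le> CR"
      using ij by (intro gd_logistic_deriv_ratio_le[OF act a2 y_def CR(1,2) near_orth bounds(1)
            less_imp_le[OF alpha_pos] bounds(2)]) auto
  qed
  then show ?thesis
    using init_measure_norm_le_whp[OF omega_pos delta] unfolding s_def by blast
qed

end
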